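(* For every graph $G=(V,E)$, the graph $G'$ defined below is chordal bipartite.
   Context: $G'$ has vertices $x_v,y_v$ for each $v\in V$ and $p_{e,u},q_{e,u},p_{e,v},q_{e,v}$ for each edge $e=uv\in E$. Its edges are: $x_vy_u$ for all $u,v\in V$ (including $u=v$); and for each $e=uv\in E$, the edges $p_{e,u}q_{e,u}$, $p_{e,v}q_{e,v}$, $x_up_{e,u}$, $y_vq_{e,u}$, $x_vp_{e,v}$, $y_uq_{e,v}$. A graph is chordal bipartite if it is bipartite and every cycle of length at least $6$ has a chord. *)

theory Defs
  imports Main
begin

definition simple_graph :: "'a set \<Rightarrow> 'a set set \<Rightarrow> bool" where
  "simple_graph V E \<longleftrightarrow> (\<forall>e\<in>E. card e = 2 \<and> e \<subseteq> V)"

definition adj :: "'a set set \<Rightarrow> 'a \<Rightarrow> 'a \<Rightarrow> bool" where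
  "adj E u v \<longleftrightarrow> {u, v} \<in> E"

definition bipartite :: "'a set \<Rightarrow> 'a set set \<Rightarrow> bool" where
  "bipartite V E \<longleftrightarrow> (\<exists>c :: 'a \<Rightarrow> bool. \<forall>u\<in>V. \<forall>v\<in>V. adj E u v \<longrightarrow> c u \<noteq> c v)"

definition is_cycle :: "'a set \<Rightarrow> 'a set set \<Rightarrow> 'a list \<Rightarrow> bool" where
  "is_cycle V E vs \<longleftrightarrow> length vs \<ge> 3 \<and> distinct vs \<and> set vs \<subseteq> V \<and>
     (\<forall>i < length vs. adj E (vs ! i) (vs ! ((i + 1) mod length vs)))"

definition has_chord :: "'a set set \<Rightarrow> 'a list \<Rightarrow> bool" where
  "has_chord E vs \<longleftrightarrow> (\<exists>i < length vs. \<exists>j < length vs. i \<noteq> j \<and>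
     j \<noteq> (i + 1) mod length vs \<and> i \<noteq> (j + 1) mod length vs \<and> adj E (vs ! i) (vs ! j))"

definition chordal_bipartite :: "'a set \<Rightarrow> 'a set set \<Rightarrow> bool" where
  "chordal_bipartite V E \<longleftrightarrow> bipartite V E \<and>
     (\<forall>vs. is_cycle V E vs \<and> length vs \<ge> 6 \<longrightarrow> has_chord E vs)"

datatype 'a gvert = X 'a | Y 'a | P "'a set" 'a | Q "'a set" 'a

definition G'_verts :: "'a set \<Rightarrow> 'a set set \<Rightarrow> 'a gvert set" where
  "G'_verts V E = X ` V \<union> Y ` V \<union> {P e u | e u. e \<in> E \<and> u \<in> e} \<union> {Q e u | e u. e \<in> E \<and> u \<in> e}"

definition G'_edges :: "'a set \<Rightarrow> 'a set set \<Rightarrow> 'a gvert set set" where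
  "G'_edges V E =
     {{X v, Y u} | u v. u \<in> V \<and> v \<in> V}
   \<union> {{P e u, Q e u} | e u. e \<in> E \<and> u \<in> e}
   \<union> {{X u, P e u} | e u. e \<in> E \<and> u \<in> e}
   \<union> {{Y w, Q e u} | e u w. e \<in> E \<and> u \<in> e \<and> w \<in> e \<and> w \<noteq> u}"

end

theory Submission
  imports Defs
begin

(*
  G' is bipartite with sides {x_v, q_{e,u}} and {y_v, p_{e,u}}.  For chords,
  enumerate a cycle of length n periodically as f 0, f 1, ... (f (k + n) = f k).  Since
  x_a y_b is an edge of G' for all a, b in V, it suffices to find a position k with
  {f k, f (k + 3)} = {x_a, y_b}: for n >= 5 the positions k and k + 3 are non-consecutive,
  so this edge is a chord.  Such a position exists:
   - if some p_{e,u} occurs, its two cycle neighbours are x_u and q_{e,u}, and the other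
     neighbour of q_{e,u} is some y_w, giving the path x_u p_{e,u} q_{e,u} y_w;
   - a q_{e,u} forces a p_{e,u} next to it, because its only other neighbour is y_w for the
     unique endpoint w <> u of the 2-element edge e;
   - otherwise the cycle alternates between x- and y-vertices, and f 0, f 3 is such a pair.
*)

lemma adj_swap: "adj E a b \<Longrightarrow> adj E b a"
  by (simp add: adj_def insert_commute)

lemma mod_add_shift_neq:
  fixes a d n :: nat
  assumes "0 < d" "d < n"
  shows "(a + d) mod n \<noteq> a mod n"
proof
  assume "(a + d) mod n = a mod n"
  then have "n dvd d" using mod_eq_dvd_iff_nat[of a "a + d" n] by simp
  with assms show False by (simp add: nat_dvd_not_less)
qed

definition periodic_cycle :: "'v set set \<Rightarrow> nat \<Rightarrow> (nat \<Rightarrow> 'v) \<Rightarrow> bool" where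
  "periodic_cycle E n f \<longleftrightarrow>
     (\<forall>k. f (k + n) = f k) \<and> (\<forall>k. adj E (f k) (f (Suc k))) \<and>
     (\<forall>k d. 0 < d \<longrightarrow> d < n \<longrightarrow> f (k + d) \<noteq> f k)"

lemma periodic_cycle_of_cycle:
  assumes "is_cycle V E vs"
  shows "periodic_cycle E (length vs) (\<lambda>k. vs ! (k mod length vs))"
proof -
  let ?n = "length vs"
  have n: "0 < ?n" and dist: "distinct vs"
    and step: "\<And>i. i < ?n \<Longrightarrow> adj E (vs ! i) (vs ! ((i + 1) mod ?n))"
    using assms unfolding is_cycle_def by auto
  have "adj E (vs ! (k mod ?n)) (vs ! (Suc k mod ?n))" for k
    using step[of "k mod ?n"] n by (simp add: mod_Suc_eq)
  moreover have "vs ! ((k + d) mod ?n) \<noteq> vs ! (k mod ?n)" if "0 < d" "d < ?n" for k d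
    using mod_add_shift_neq[OF that, of k] n dist by (simp add: nth_eq_iff_index_eq)
  ultimately show ?thesis unfolding periodic_cycle_def by simp
qed

lemma periodic_cycle_step: "periodic_cycle E n f \<Longrightarrow> adj E (f k) (f (Suc k))"
  unfolding periodic_cycle_def by blast

lemma periodic_cycle_apart: "periodic_cycle E n f \<Longrightarrow> 0 < d \<Longrightarrow> d < n \<Longrightarrow> f (k + d) \<noteq> f k"
  unfolding periodic_cycle_def by blast

text \<open>Every term of a periodic cycle also occurs with two predecessors, which lets us look
  backwards along the cycle without truncated subtraction.\<close>
lemma periodic_cycle_two_back:
  assumes "periodic_cycle E n f" "2 \<le> n"
  shows "\<exists>j. f (j + 2) = f i"
proof
  have "i + n - 2 + 2 = i + n" using assms(2) by simp
  moreover have "f (i + n) = f i" using assms(1) unfolding periodic_cycle_def by blast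
  ultimately show "f (i + n - 2 + 2) = f i" by simp
qed

lemma chord_at_distance_three:
  assumes cyc: "is_cycle V E vs" and len: "5 \<le> length vs"
    and edge: "adj E (vs ! (k mod length vs)) (vs ! ((k + 3) mod length vs))"
  shows "has_chord E vs"
proof -
  let ?n = "length vs"
  define i j where "i = k mod ?n" and "j = (k + 3) mod ?n"
  have "0 < ?n" using len by linarith
  then have "i < ?n" "j < ?n" by (simp_all add: i_def j_def)
  moreover have "i \<noteq> j"
    using mod_add_shift_neq[of 3 ?n k] len by (simp add: i_def j_def)
  moreover have "j \<noteq> (i + 1) mod ?n"
  proof -
    have "(k + 1 + 2) mod ?n \<noteq> (k + 1) mod ?n"
      by (rule mod_add_shift_neq) (use len in auto)
    then show ?thesis by (simp add: i_def j_def mod_Suc_eq numeral_3_eq_3)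
  qed
  moreover have "i \<noteq> (j + 1) mod ?n"
    using mod_add_shift_neq[of 4 ?n k] len
    by (simp add: i_def j_def mod_Suc_eq add.commute)
  ultimately show ?thesis
    using edge unfolding has_chord_def i_def[symmetric] j_def[symmetric] by blast
qed

lemma adj_G'_X:
  "adj (G'_edges V E) (X a) z \<Longrightarrow>
     (\<exists>b. z = Y b \<and> a \<in> V \<and> b \<in> V) \<or> (\<exists>e. z = P e a \<and> e \<in> E \<and> a \<in> e)"
  unfolding adj_def G'_edges_def by (auto simp: doubleton_eq_iff)

lemma adj_G'_Y:
  "adj (G'_edges V E) (Y b) z \<Longrightarrow>
     (\<exists>a. z = X a \<and> a \<in> V \<and> b \<in> V) \<or> (\<exists>e u. z = Q e u)"
  unfolding adj_def G'_edges_def by (auto simp: doubleton_eq_iff)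

lemma adj_G'_P:
  "adj (G'_edges V E) (P e u) z \<Longrightarrow> e \<in> E \<and> u \<in> e \<and> (z = X u \<or> z = Q e u)"
  unfolding adj_def G'_edges_def by (auto simp: doubleton_eq_iff)

lemma adj_G'_Q:
  "adj (G'_edges V E) (Q e u) z \<Longrightarrow>
     e \<in> E \<and> u \<in> e \<and> (z = P e u \<or> (\<exists>w. z = Y w \<and> w \<in> e \<and> w \<noteq> u))"
  unfolding adj_def G'_edges_def by (auto simp: doubleton_eq_iff)

lemma adj_G'_X_Y: "a \<in> V \<Longrightarrow> b \<in> V \<Longrightarrow> adj (G'_edges V E) (X a) (Y b)"
  unfolding adj_def G'_edges_def by blast

lemma G'_bipartite: "bipartite (G'_verts V E) (G'_edges V E)"
  unfolding bipartite_def
proof (intro exI ballI impI)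
  fix s t assume "adj (G'_edges V E) s t"
  then show "(case s of X _ \<Rightarrow> True | Q _ _ \<Rightarrow> True | _ \<Rightarrow> False)
           \<noteq> (case t of X _ \<Rightarrow> True | Q _ _ \<Rightarrow> True | _ \<Rightarrow> False)"
    unfolding adj_def G'_edges_def by (auto simp: doubleton_eq_iff)
qed

text \<open>A vertex p_{e,u} on a cycle lies on the path x_u p_{e,u} q_{e,u} y_w, whose ends
  are adjacent.\<close>
lemma distance_three_edge_at_P:
  assumes sg: "simple_graph V E" and cyc: "periodic_cycle (G'_edges V E) n f" and n: "4 \<le> n"
    and fP: "f i = P e u"
  shows "\<exists>k. adj (G'_edges V E) (f k) (f (k + 3))"
proof -
  let ?G = "G'_edges V E"
  obtain j where "f (j + 2) = f i" using periodic_cycle_two_back[OF cyc] n by auto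
  with fP have Pj: "f (j + 2) = P e u" by simp
  note step = periodic_cycle_step[OF cyc]
  have apart: "f (k + 2) \<noteq> f k" for k using periodic_cycle_apart[OF cyc, of 2 k] n by simp
  have "adj ?G (P e u) (f (j + 1))"
    using adj_swap[OF step[of "j + 1"]] Pj by simp
  from adj_G'_P[OF this] have eu: "e \<in> E" "u \<in> e" and left: "f (j + 1) \<in> {X u, Q e u}"
    by auto
  have "adj ?G (P e u) (f (j + 3))"
    using step[of "j + 2"] Pj by (simp add: numeral_3_eq_3)
  from adj_G'_P[OF this] have right: "f (j + 3) \<in> {X u, Q e u}" by auto
  have e_sub: "e \<subseteq> V" using sg eu unfolding simple_graph_def by blast
  with eu have uV: "u \<in> V" by blast
  have "f (j + 3) \<noteq> f (j + 1)" using apart[of "j + 1"] by (simp add: numeral_3_eq_3)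
  then consider "f (j + 1) = X u" "f (j + 3) = Q e u" | "f (j + 1) = Q e u" "f (j + 3) = X u"
    using left right by auto
  then show ?thesis
  proof cases
    case 1
    have "adj ?G (Q e u) (f (j + 4))"
      using step[of "j + 3"] 1 by (simp add: numeral_eq_Suc)
    from adj_G'_Q[OF this] have "f (j + 4) = P e u \<or> (\<exists>w. f (j + 4) = Y w \<and> w \<in> e)"
      by blast
    moreover have "f (j + 4) \<noteq> P e u" using apart[of "j + 2"] Pj by (simp add: numeral_eq_Suc)
    ultimately obtain w where w: "f (j + 4) = Y w" "w \<in> e" by blast
    with e_sub have "adj ?G (f (j + 1)) (f (j + 4))"
      using 1 adj_G'_X_Y[OF uV, of w] by auto
    moreover have "j + 4 = (j + 1) + 3" by simp
    ultimately show ?thesis by metis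
  next
    case 2
    have "adj ?G (Q e u) (f j)" using adj_swap[OF step[of j]] 2 by simp
    from adj_G'_Q[OF this] have "f j = P e u \<or> (\<exists>w. f j = Y w \<and> w \<in> e)"
      by blast
    moreover have "f j \<noteq> P e u" using apart[of j] Pj by simp
    ultimately obtain w where w: "f j = Y w" "w \<in> e" by blast
    with e_sub have "adj ?G (f j) (f (j + 3))"
      using 2 adj_swap[OF adj_G'_X_Y[OF uV, of w]] by auto
    then show ?thesis by blast
  qed
qed

text \<open>A vertex q_{e,u} on a cycle has p_{e,u} as a cycle neighbour: its other possible
  neighbour y_w is unique, since e has exactly one endpoint w different from u.\<close>
lemma P_next_to_Q:
  assumes sg: "simple_graph V E" and cyc: "periodic_cycle (G'_edges V E) n f" and n: "2 < n"
    and fQ: "f (Suc j) = Q e u"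
  shows "\<exists>i. f i = P e u"
proof (rule ccontr)
  assume noP: "\<nexists>i. f i = P e u"
  have "adj (G'_edges V E) (Q e u) (f j)"
    using adj_swap[OF periodic_cycle_step[OF cyc, of j]] fQ by simp
  from adj_G'_Q[OF this] noP
  obtain w1 where e: "e \<in> E" "u \<in> e" and w1: "f j = Y w1" "w1 \<in> e" "w1 \<noteq> u"
    by blast
  have "adj (G'_edges V E) (Q e u) (f (j + 2))"
    using periodic_cycle_step[OF cyc, of "Suc j"] fQ by simp
  from adj_G'_Q[OF this] noP obtain w2 where w2: "f (j + 2) = Y w2" "w2 \<in> e" "w2 \<noteq> u"
    by blast
  have "card e = 2" using sg e unfolding simple_graph_def by blast
  then have "w1 = w2" using e w1 w2 by (auto simp: card_2_iff)
  moreover have "f (j + 2) \<noteq> f j" using periodic_cycle_apart[OF cyc, of 2 j] n by simp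
  ultimately show False using w1 w2 by simp
qed

text \<open>A cycle avoiding all p- and q-vertices alternates between x- and y-vertices, so its
  terms at positions 0 and 3 form an x--y pair.\<close>
lemma distance_three_edge_without_PQ:
  assumes cyc: "periodic_cycle (G'_edges V E) n f"
    and noPQ: "\<And>i e u. f i \<noteq> P e u \<and> f i \<noteq> Q e u"
  shows "adj (G'_edges V E) (f 0) (f 3)"
proof -
  note step = periodic_cycle_step[OF cyc]
  have X_Y: "\<exists>b. f (Suc k) = Y b \<and> a \<in> V \<and> b \<in> V" if "f k = X a" for k a
    using adj_G'_X[OF step[of k, unfolded that]] noPQ by blast
  have Y_X: "\<exists>a. f (Suc k) = X a \<and> a \<in> V \<and> b \<in> V" if "f k = Y b" for k b
    using adj_G'_Y[OF step[of k, unfolded that]] noPQ by blast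
  have "(\<exists>a. f 0 = X a) \<or> (\<exists>b. f 0 = Y b)"
    using noPQ[of 0] by (cases "f 0") auto
  then show ?thesis
  proof
    assume "\<exists>a. f 0 = X a"
    then obtain a0 where "f 0 = X a0" by blast
    then obtain b1 where "f 1 = Y b1" using X_Y[of 0] by auto
    then obtain a2 where "f 2 = X a2" "a2 \<in> V" using Y_X[of 1] by (auto simp: numeral_2_eq_2)
    then obtain b3 where "f 3 = Y b3" "b3 \<in> V" using X_Y[of 2] by (auto simp: numeral_3_eq_3)
    moreover have "a0 \<in> V" using X_Y[of 0] \<open>f 0 = X a0\<close> by auto
    ultimately show ?thesis using \<open>f 0 = X a0\<close> adj_G'_X_Y by metis
  next
    assume "\<exists>b. f 0 = Y b"
    then obtain b0 where "f 0 = Y b0" by blast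
    then obtain a1 where "f 1 = X a1" using Y_X[of 0] by auto
    then obtain b2 where "f 2 = Y b2" "b2 \<in> V" using X_Y[of 1] by (auto simp: numeral_2_eq_2)
    then obtain a3 where "f 3 = X a3" "a3 \<in> V" using Y_X[of 2] by (auto simp: numeral_3_eq_3)
    moreover have "b0 \<in> V" using Y_X[of 0] \<open>f 0 = Y b0\<close> by auto
    ultimately show ?thesis using \<open>f 0 = Y b0\<close> adj_swap[OF adj_G'_X_Y] by metis
  qed
qed

lemma G'_cycle_distance_three_edge:
  assumes sg: "simple_graph V E" and cyc: "periodic_cycle (G'_edges V E) n f" and n: "4 \<le> n"
  shows "\<exists>k. adj (G'_edges V E) (f k) (f (k + 3))"
proof (cases "\<exists>i e u. f i = P e u \<or> f i = Q e u")
  case True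
  then obtain i e u where "f i = P e u \<or> f i = Q e u" by blast
  moreover have "\<exists>i'. f i' = P e u" if "f i = Q e u"
  proof -
    obtain j where "f (j + 2) = f i" using periodic_cycle_two_back[OF cyc] n by auto
    then show ?thesis using P_next_to_Q[OF sg cyc, of "j + 1"] n that by simp
  qed
  ultimately obtain i' where "f i' = P e u" by blast
  then show ?thesis using distance_three_edge_at_P[OF sg cyc n] by blast
next
  case False
  then have "adj (G'_edges V E) (f 0) (f 3)"
    using distance_three_edge_without_PQ[OF cyc] by blast
  then show ?thesis by (intro exI[of _ 0]) simp
qed

theorem lemma11:
  fixes V :: "'a set" and E :: "'a set set"
  assumes "simple_graph V E"
  shows "chordal_bipartite (G'_verts V E) (G'_edges V E)"
  unfolding chordal_bipartite_def
proof (intro conjI allI impI)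
  show "bipartite (G'_verts V E) (G'_edges V E)" by (rule G'_bipartite)
next
  fix vs assume vs: "is_cycle (G'_verts V E) (G'_edges V E) vs \<and> 6 \<le> length vs"
  let ?f = "\<lambda>k. vs ! (k mod length vs)"
  have "periodic_cycle (G'_edges V E) (length vs) ?f"
    using vs periodic_cycle_of_cycle by blast
  then obtain k where "adj (G'_edges V E) (?f k) (?f (k + 3))"
    using G'_cycle_distance_three_edge[OF assms] vs by fastforce
  then show "has_chord (G'_edges V E) vs"
    using chord_at_distance_three vs by fastforce
qed

end
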